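(* Fix the rates $P_i>0$, $i\in\mathcal S$, let $\hat P=\sum_{i\in\mathcal S}P_i$, and let $(E_i(0),\,i\in\mathcal S)$ be any initial energy configuration with total energy $E=\sum_iE_i(0)$. Let $(\tilde E_i(0),\,i\in\mathcal S)$ be the balanced configuration with the same total energy, $\tilde E_i(0)=E\,P_i/\hat P$ (assumed to satisfy $\tilde E_i(0)\le\overline E_i$). If a nonnegative demand function $(d(t),\,t\ge0)$ can be completely served on $[0,T]$ by some discharge-only policy starting from $(E_i(0))$, then it can be completely served on $[0,T]$ by some discharge-only policy starting from $(\tilde E_i(0))$.
   Context: A finite set $\mathcal S$ of energy stores is given. Store $i\in\mathcal S$ has capacity $\overline E_i>0$ and maximum discharge rate $P_i>0$. A (discharge-only) policy is a choice of measurable rate functions $(r_i(t),\,t\ge0)$, $i\in\mathcal S$, with stored energies $E_i(t)=E_i(0)-\int_0^t r_i(u)\,du$, subject to $0\le E_i(t)\le\overline E_i$, $0\le r_i(t)\le P_i$ and $\sum_{i\in\mathcal S}r_i(t)\le d(t)$ for all $t\ge0$, where $(d(t),\,t\ge0)$ is a nonnegative demand function. The demand is completely served on $[0,T]$ if $\sum_i r_i(t)=d(t)$ for almost every $t\in[0,T]$. A configuration is called balanced if $E_i/P_i$ is the same for all $i\in\mathcal S$. *)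

theory Defs
  imports "HOL-Analysis.Analysis"
begin

definition stored_energy :: "('a \<Rightarrow> real) \<Rightarrow> ('a \<Rightarrow> real \<Rightarrow> real) \<Rightarrow> 'a \<Rightarrow> real \<Rightarrow> real" where
  "stored_energy E0 r i t = E0 i - set_lebesgue_integral lborel {0..t} (r i)"

definition discharge_policy ::
  "'a set \<Rightarrow> ('a \<Rightarrow> real) \<Rightarrow> ('a \<Rightarrow> real) \<Rightarrow> (real \<Rightarrow> real) \<Rightarrow> ('a \<Rightarrow> real)
    \<Rightarrow> ('a \<Rightarrow> real \<Rightarrow> real) \<Rightarrow> bool" where
  "discharge_policy S Ebar P d E0 r \<longleftrightarrow>
     (\<forall>i\<in>S. r i \<in> borel_measurable lborel) \<and>
     (\<forall>t\<ge>0. (\<forall>i\<in>S. 0 \<le> stored_energy E0 r i t \<and> stored_energy E0 r i t \<le> Ebar i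
                      \<and> 0 \<le> r i t \<and> r i t \<le> P i)
             \<and> (\<Sum>i\<in>S. r i t) \<le> d t)"

definition completely_served :: "'a set \<Rightarrow> (real \<Rightarrow> real) \<Rightarrow> real \<Rightarrow> ('a \<Rightarrow> real \<Rightarrow> real) \<Rightarrow> bool" where
  "completely_served S d T r \<longleftrightarrow>
     (AE t in lborel. t \<in> {0..T} \<longrightarrow> (\<Sum>i\<in>S. r i t) = d t)"

end

theory Submission
  imports Defs
begin

text \<open>Replace a feasible policy by the one that splits its total rate among the stores in
  proportion to their maximal rates. The total rate, hence the served demand, is unchanged; each
  rate stays within its bound because the total rate is at most the sum of the maximal rates; and
  started from the balanced configuration, every store holds the fraction P i / (\<Sum>j. P j) of the
  total energy left by the original policy, which lies between 0 and the total initial energy.\<close>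

definition proportional_rates ::
  "'a set \<Rightarrow> ('a \<Rightarrow> real) \<Rightarrow> ('a \<Rightarrow> real \<Rightarrow> real) \<Rightarrow> 'a \<Rightarrow> real \<Rightarrow> real" where
  "proportional_rates S P r i t = P i / (\<Sum>j\<in>S. P j) * (\<Sum>j\<in>S. r j t)"

definition balanced_energies :: "'a set \<Rightarrow> ('a \<Rightarrow> real) \<Rightarrow> ('a \<Rightarrow> real) \<Rightarrow> 'a \<Rightarrow> real" where
  "balanced_energies S P E0 i = (\<Sum>j\<in>S. E0 j) * P i / (\<Sum>j\<in>S. P j)"

lemma sum_proportional_rates:
  assumes "finite S" and "\<forall>i\<in>S. P i > 0"
  shows "(\<Sum>i\<in>S. proportional_rates S P r i t) = (\<Sum>i\<in>S. r i t)"
proof (cases "S = {}")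
  case False
  then have "(\<Sum>j\<in>S. P j) \<noteq> 0"
    using assms sum_pos[of S P] by auto
  then show ?thesis
    unfolding proportional_rates_def
    by (simp add: sum_distrib_right[symmetric] sum_divide_distrib[symmetric])
qed simp

lemma completely_served_proportional_rates:
  assumes "finite S" and "\<forall>i\<in>S. P i > 0" and "completely_served S d T r"
  shows "completely_served S d T (proportional_rates S P r)"
  using assms(3) unfolding completely_served_def sum_proportional_rates[OF assms(1,2)] .

lemma set_integrable_Icc_bounded:
  fixes f :: "real \<Rightarrow> real"
  assumes "f \<in> borel_measurable lborel" and "\<And>x. x \<in> {a..b} \<Longrightarrow> \<bar>f x\<bar> \<le> B"
  shows "set_integrable lborel {a..b} f"
  unfolding set_integrable_def
  by (rule integrableI_bounded_set[where A = "{a..b}" and B = B])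
     (use assms in \<open>auto simp: indicator_def emeasure_lborel_Icc_eq\<close>)

lemma discharge_policy_set_integrable:
  assumes "discharge_policy S Ebar P d E0 r" and "i \<in> S" and "t \<ge> 0"
  shows "set_integrable lborel {0..t} (r i)"
  using assms unfolding discharge_policy_def
  by (intro set_integrable_Icc_bounded[where B = "P i"]) auto

lemma set_integral_nonneg:
  fixes f :: "'a \<Rightarrow> real"
  assumes "\<And>x. x \<in> A \<Longrightarrow> 0 \<le> f x"
  shows "0 \<le> set_lebesgue_integral M A f"
  unfolding set_lebesgue_integral_def
  by (rule Bochner_Integration.integral_nonneg) (use assms in \<open>auto simp: indicator_def\<close>)

lemma discharge_policy_integral_nonneg:
  assumes "discharge_policy S Ebar P d E0 r" and "i \<in> S" and "t \<ge> 0"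
  shows "0 \<le> set_lebesgue_integral lborel {0..t} (r i)"
  using assms unfolding discharge_policy_def
  by (intro set_integral_nonneg) auto

lemma stored_energy_proportional_rates:
  assumes "discharge_policy S Ebar P d E0 r" and "t \<ge> 0"
  shows "stored_energy (balanced_energies S P E0) (proportional_rates S P r) i t
           = P i / (\<Sum>j\<in>S. P j) * (\<Sum>j\<in>S. stored_energy E0 r j t)"
proof -
  have "set_lebesgue_integral lborel {0..t} (\<lambda>u. \<Sum>j\<in>S. r j u)
          = (\<Sum>j\<in>S. set_lebesgue_integral lborel {0..t} (r j))"
    using discharge_policy_set_integrable[OF assms(1) _ assms(2)]
    unfolding set_lebesgue_integral_def set_integrable_def scaleR_sum_right
    by (intro Bochner_Integration.integral_sum) auto
  then show ?thesis
    unfolding stored_energy_def proportional_rates_def balanced_energies_def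
    by (simp add: sum_subtractf algebra_simps)
qed

lemma discharge_policy_proportional_rates:
  assumes "finite S" and P_pos: "\<forall>i\<in>S. P i > 0"
    and capacity: "\<forall>i\<in>S. balanced_energies S P E0 i \<le> Ebar i"
    and policy: "discharge_policy S Ebar P d E0 r"
  shows "discharge_policy S Ebar P d (balanced_energies S P E0) (proportional_rates S P r)"
  unfolding discharge_policy_def
proof (intro conjI allI impI ballI)
  fix i assume "i \<in> S"
  have "(\<lambda>t. \<Sum>j\<in>S. r j t) \<in> borel_measurable lborel"
    using policy unfolding discharge_policy_def by (intro borel_measurable_sum) auto
  then show "proportional_rates S P r i \<in> borel_measurable lborel"
    unfolding proportional_rates_def by simp
next
  fix t :: real assume "t \<ge> 0"
  then have feasible: "\<forall>i\<in>S. 0 \<le> stored_energy E0 r i t \<and> 0 \<le> r i t \<and> r i t \<le> P i"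
    and served: "(\<Sum>i\<in>S. r i t) \<le> d t"
    using policy unfolding discharge_policy_def by auto
  show "(\<Sum>i\<in>S. proportional_rates S P r i t) \<le> d t"
    using served by (simp add: sum_proportional_rates[OF assms(1) P_pos])
  fix i assume i: "i \<in> S"
  define w where "w = P i / (\<Sum>j\<in>S. P j)"
  have "(\<Sum>j\<in>S. P j) > 0"
    using assms(1) P_pos i by (intro sum_pos) auto
  then have w: "0 \<le> w" "w * (\<Sum>j\<in>S. P j) = P i"
    using P_pos i by (auto simp: w_def less_imp_le)
  have stored: "stored_energy (balanced_energies S P E0) (proportional_rates S P r) i t
                  = w * (\<Sum>j\<in>S. stored_energy E0 r j t)"
    unfolding w_def by (rule stored_energy_proportional_rates[OF policy \<open>t \<ge> 0\<close>])
  show "0 \<le> stored_energy (balanced_energies S P E0) (proportional_rates S P r) i t"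
    unfolding stored using w feasible by (simp add: sum_nonneg)
  have "(\<Sum>j\<in>S. stored_energy E0 r j t) \<le> (\<Sum>j\<in>S. E0 j)"
    unfolding stored_energy_def
    using discharge_policy_integral_nonneg[OF policy _ \<open>t \<ge> 0\<close>] by (intro sum_mono) auto
  then have "w * (\<Sum>j\<in>S. stored_energy E0 r j t) \<le> w * (\<Sum>j\<in>S. E0 j)"
    using w by (intro mult_left_mono)
  also have "\<dots> = balanced_energies S P E0 i"
    by (simp add: balanced_energies_def w_def)
  also have "\<dots> \<le> Ebar i"
    using capacity i by simp
  finally show "stored_energy (balanced_energies S P E0) (proportional_rates S P r) i t \<le> Ebar i"
    unfolding stored .
  show "0 \<le> proportional_rates S P r i t"
    unfolding proportional_rates_def w_def[symmetric] using w feasible by (simp add: sum_nonneg)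
  have "(\<Sum>j\<in>S. r j t) \<le> (\<Sum>j\<in>S. P j)"
    using feasible by (intro sum_mono) auto
  then have "w * (\<Sum>j\<in>S. r j t) \<le> w * (\<Sum>j\<in>S. P j)"
    using w by (intro mult_left_mono)
  then show "proportional_rates S P r i t \<le> P i"
    unfolding proportional_rates_def w_def[symmetric] using w by simp
qed

theorem mainTheorem3:
  fixes S :: "'a set" and Ebar P E0 :: "'a \<Rightarrow> real" and d :: "real \<Rightarrow> real" and T :: real
  assumes "finite S"
    and "\<forall>i\<in>S. Ebar i > 0"
    and "\<forall>i\<in>S. P i > 0"
    and "\<forall>t\<ge>0. d t \<ge> 0"
    and "\<forall>i\<in>S. (\<Sum>j\<in>S. E0 j) * P i / (\<Sum>j\<in>S. P j) \<le> Ebar i"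
    and "\<exists>r. discharge_policy S Ebar P d E0 r \<and> completely_served S d T r"
  shows "\<exists>r. discharge_policy S Ebar P d (\<lambda>i. (\<Sum>j\<in>S. E0 j) * P i / (\<Sum>j\<in>S. P j)) r
             \<and> completely_served S d T r"
proof -
  obtain r where "discharge_policy S Ebar P d E0 r" and "completely_served S d T r"
    using assms(6) by blast
  then have "discharge_policy S Ebar P d (balanced_energies S P E0) (proportional_rates S P r)"
    and "completely_served S d T (proportional_rates S P r)"
    using assms(1,3,5)
    by (auto intro: discharge_policy_proportional_rates completely_served_proportional_rates
             simp: balanced_energies_def)
  then show ?thesis
    unfolding balanced_energies_def by blast
qed

end
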